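(* Let $G=(V,E)$ be a finite graph, $p_e\in(0,1)$ and $x_e>0$ for each $e\in E$. Let $\Omega=\{0,1\}^E$, $\Sigma\subset\Omega$, $f:\Omega\to2^\Sigma$, $f(\omega)=\Sigma^\uparrow(\omega):=\{\eta\in\Sigma\mid\eta\supset\omega\}$, and $$\rho[\omega]=\mathbb{P}_p[\omega]\ (\omega\in\Omega),\qquad\gamma[\eta]=\mathbb{P}_{\frac{x(1-p)}{1+x(1-p)}}[\eta\mid\Sigma]\propto\prod_{e\in\eta}x_e(1-p_e)\ (\eta\in\Sigma).$$ Let $\mathscr{P}$ be the probability measure on $\Omega\times\Sigma$ with $\mathscr{P}[\omega,\eta]\propto\rho[\omega]\gamma[\eta]\mathbf{1}[\eta\in f(\omega)]$. Then: (a) The marginal on $\Sigma$ satisfies $\mathscr{P}_\Sigma[\eta]\propto\prod_{e\in\eta}x_e$. For each $\omega$ with $\mathscr{P}_\Omega[\omega]\neq0$, $\mathscr{P}[\cdot\mid\omega]=\mathbb{P}_{\frac{x(1-p)}{1+x(1-p)}}[\cdot\mid\Sigma^\uparrow(\omega)]$. (b) The marginal on $\Omega$ is $\mathscr{P}_\Omega=\mathscr{P}_\Sigma\cap\mathbb{P}_p$. For each $\eta\in\Sigma$ with $\mathscr{P}_\Sigma[\eta]\neq0$, $\mathscr{P}[\cdot\mid\eta]=\mathbb{P}_p\cap\delta_\eta=\mathbb{P}_{\eta,p}$.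
   Context: Elements of $\{0,1\}^E$ are identified with subsets of $E$. For $r\in[0,1]^E$, $\mathbb{P}_r$ is Bernoulli percolation (edge $e$ open independently with probability $r_e$); vector operations such as $\frac{x(1-p)}{1+x(1-p)}$ are coordinatewise. $\mathbb{P}_{\eta,p}$ is Bernoulli percolation with parameters $p$ on the edges of $\eta$ with all edges outside $\eta$ closed. $\delta_\eta$ is the Dirac mass at $\eta$. For measures $\pi,\nu$ on $\{0,1\}^E$, $\pi\cap\nu$ is the law of the intersection of the open-edge sets of independent samples of $\pi$ and $\nu$. *)

theory Defs
  imports Main "HOL-Library.Library"
begin

text \<open>Configurations in \<open>{0,1}^E\<close> are identified with subsets of the finite edge set \<open>E\<close>.
  Probability measures on \<open>{0,1}^E\<close> are represented by their mass functions
  \<open>'e set \<Rightarrow> real\<close> (zero outside \<open>Pow E\<close>).\<close>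

definition perc :: "'e set \<Rightarrow> ('e \<Rightarrow> real) \<Rightarrow> 'e set \<Rightarrow> real" where
  "perc E r \<omega> = (if \<omega> \<subseteq> E then (\<Prod>e\<in>E. if e \<in> \<omega> then r e else 1 - r e) else 0)"

definition perc_on :: "'e set \<Rightarrow> 'e set \<Rightarrow> ('e \<Rightarrow> real) \<Rightarrow> 'e set \<Rightarrow> real" where
  "perc_on E \<eta> p = perc E (\<lambda>e. if e \<in> \<eta> then p e else 0)"

definition cond :: "('e set \<Rightarrow> real) \<Rightarrow> 'e set set \<Rightarrow> 'e set \<Rightarrow> real" where
  "cond \<mu> A \<omega> = (if \<omega> \<in> A then \<mu> \<omega> / (\<Sum>a\<in>A. \<mu> a) else 0)"

definition dirac :: "'e set \<Rightarrow> 'e set \<Rightarrow> real" where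
  "dirac \<eta> \<omega> = (if \<omega> = \<eta> then 1 else 0)"

definition inter_law :: "'e set \<Rightarrow> ('e set \<Rightarrow> real) \<Rightarrow> ('e set \<Rightarrow> real) \<Rightarrow> 'e set \<Rightarrow> real" where
  "inter_law E \<pi> \<nu> \<omega> = (\<Sum>(a, b) \<in> Pow E \<times> Pow E. if a \<inter> b = \<omega> then \<pi> a * \<nu> b else 0)"

definition up_set :: "'e set set \<Rightarrow> 'e set \<Rightarrow> 'e set set" where
  "up_set \<Sigma> \<omega> = {\<eta> \<in> \<Sigma>. \<omega> \<subseteq> \<eta>}"

definition qpar :: "('e \<Rightarrow> real) \<Rightarrow> ('e \<Rightarrow> real) \<Rightarrow> 'e \<Rightarrow> real" where
  "qpar p x e = x e * (1 - p e) / (1 + x e * (1 - p e))"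

definition rho :: "'e set \<Rightarrow> ('e \<Rightarrow> real) \<Rightarrow> 'e set \<Rightarrow> real" where
  "rho E p = perc E p"

definition gamma :: "'e set \<Rightarrow> ('e \<Rightarrow> real) \<Rightarrow> ('e \<Rightarrow> real) \<Rightarrow> 'e set set \<Rightarrow> 'e set \<Rightarrow> real" where
  "gamma E p x \<Sigma> = cond (perc E (qpar p x)) \<Sigma>"

definition joint_w :: "'e set \<Rightarrow> ('e \<Rightarrow> real) \<Rightarrow> ('e \<Rightarrow> real) \<Rightarrow> 'e set set \<Rightarrow> 'e set \<Rightarrow> 'e set \<Rightarrow> real" where
  "joint_w E p x \<Sigma> \<omega> \<eta> =
     (if \<omega> \<subseteq> E \<and> \<eta> \<in> up_set \<Sigma> \<omega> then rho E p \<omega> * gamma E p x \<Sigma> \<eta> else 0)"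

definition joint :: "'e set \<Rightarrow> ('e \<Rightarrow> real) \<Rightarrow> ('e \<Rightarrow> real) \<Rightarrow> 'e set set \<Rightarrow> 'e set \<Rightarrow> 'e set \<Rightarrow> real" where
  "joint E p x \<Sigma> \<omega> \<eta> = joint_w E p x \<Sigma> \<omega> \<eta> /
     (\<Sum>(a, b) \<in> Pow E \<times> \<Sigma>. joint_w E p x \<Sigma> a b)"

definition marg_Omega :: "'e set \<Rightarrow> ('e \<Rightarrow> real) \<Rightarrow> ('e \<Rightarrow> real) \<Rightarrow> 'e set set \<Rightarrow> 'e set \<Rightarrow> real" where
  "marg_Omega E p x \<Sigma> \<omega> = (\<Sum>\<eta>\<in>\<Sigma>. joint E p x \<Sigma> \<omega> \<eta>)"

definition marg_Sigma :: "'e set \<Rightarrow> ('e \<Rightarrow> real) \<Rightarrow> ('e \<Rightarrow> real) \<Rightarrow> 'e set set \<Rightarrow> 'e set \<Rightarrow> real" where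
  "marg_Sigma E p x \<Sigma> \<eta> = (\<Sum>\<omega>\<in>Pow E. joint E p x \<Sigma> \<omega> \<eta>)"

end

(* For omega contained in eta, Bernoulli percolation factors as
   P_p[omega] = P_{eta,p}[omega] * prod_{e not in eta} (1 - p_e),
   so the joint weight of (omega, eta) is P_{eta,p}[omega] times a weight of eta alone. Summing out
   omega gives P[. | eta] = P_{eta,p}, and a Sigma-marginal proportional to
   gamma[eta] * prod_{e not in eta} (1 - p_e); with q = x(1-p)/(1+x(1-p)) one has q = x(1-p)(1-q),
   which turns this weight into prod_{e in eta} x_e up to a constant. Since the restriction of P_p
   to eta is P_{eta,p}, mixing P_{eta,p} over the Sigma-marginal is its intersection with P_p.
   For fixed omega the joint weight is proportional to gamma restricted to Sigma^up(omega), and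
   conditioning gamma = P_q[. | Sigma] further on that subset is conditioning P_q on it. *)

theory Submission
  imports Defs
begin

lemma perc_outside: "\<not> \<omega> \<subseteq> E \<Longrightarrow> perc E r \<omega> = 0"
  by (simp add: perc_def)

lemma perc_empty: "perc E r {} = (\<Prod>e\<in>E. 1 - r e)"
  by (simp add: perc_def)

lemma perc_self: "perc E r E = prod r E"
  by (simp add: perc_def)

lemma perc_split:
  assumes "finite E" "A \<subseteq> E" "\<omega> \<subseteq> E"
  shows "perc E r \<omega> = perc A r (\<omega> \<inter> A) * perc (E - A) r (\<omega> - A)"
proof -
  let ?f = "\<lambda>e. if e \<in> \<omega> then r e else 1 - r e"
  have "perc E r \<omega> = prod ?f (E - A) * prod ?f A"
    using assms by (simp add: perc_def prod.subset_diff)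
  also have "prod ?f A = perc A r (\<omega> \<inter> A)"
    by (simp add: perc_def)
  also have "prod ?f (E - A) = perc (E - A) r (\<omega> - A)"
    using assms(3) by (auto simp: perc_def intro: prod.cong)
  finally show ?thesis by simp
qed

lemma sum_perc_Pow:
  assumes "finite E"
  shows "(\<Sum>\<omega>\<in>Pow E. perc E r \<omega>) = 1"
proof -
  have "(\<Sum>\<omega>\<in>Pow E. perc E r \<omega>) = (\<Sum>\<omega>\<in>Pow E. prod r \<omega> * (\<Prod>e\<in>E - \<omega>. 1 - r e))"
    using perc_split[OF assms, of _ _ r] by (auto simp: perc_self perc_empty Int_absorb1 intro: sum.cong)
  also have "\<dots> = (\<Prod>e\<in>E. r e + (1 - r e))"
    by (rule prod_add[OF assms, symmetric])
  finally show ?thesis by simp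
qed

lemma sum_perc_Int_eq:
  assumes fin: "finite E" and AE: "A \<subseteq> E"
  shows "(\<Sum>b\<in>Pow E. if b \<inter> A = \<omega> then perc E r b else 0) = perc A r \<omega>"
proof (cases "\<omega> \<subseteq> A")
  case True
  have Pow_eq: "{b \<in> Pow E. b \<inter> A = \<omega>} = (\<union>) \<omega> ` Pow (E - A)"
  proof (intro set_eqI iffI)
    fix b assume "b \<in> {b \<in> Pow E. b \<inter> A = \<omega>}"
    then have "b = \<omega> \<union> (b - A)" "b - A \<in> Pow (E - A)" by auto
    then show "b \<in> (\<union>) \<omega> ` Pow (E - A)" by blast
  qed (use True AE in auto)
  have "inj_on ((\<union>) \<omega>) (Pow (E - A))"
    using True by (auto simp: inj_on_def)
  then have "(\<Sum>b\<in>Pow E. if b \<inter> A = \<omega> then perc E r b else 0) = (\<Sum>d\<in>Pow (E - A). perc E r (\<omega> \<union> d))"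
    using fin by (simp only: sum.inter_filter[symmetric] Pow_eq sum.reindex finite_Pow_iff o_def)
  also have "\<dots> = (\<Sum>d\<in>Pow (E - A). perc A r \<omega> * perc (E - A) r d)"
  proof (rule sum.cong[OF refl])
    fix d assume "d \<in> Pow (E - A)"
    then have "(\<omega> \<union> d) \<inter> A = \<omega>" "(\<omega> \<union> d) - A = d" "\<omega> \<union> d \<subseteq> E"
      using True AE by auto
    then show "perc E r (\<omega> \<union> d) = perc A r \<omega> * perc (E - A) r d"
      using perc_split[OF fin AE] by metis
  qed
  also have "\<dots> = perc A r \<omega>"
    using fin by (simp add: sum_distrib_left[symmetric] sum_perc_Pow)
  finally show ?thesis .
next
  case False
  then show ?thesis by (auto simp: perc_outside intro: sum.neutral)
qed

lemma perc_zero: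
  assumes "finite E" "\<omega> \<subseteq> E"
  shows "perc E (\<lambda>_. 0) \<omega> = (if \<omega> = {} then 1 else 0)"
  using assms by (auto simp: perc_def prod_zero)

lemma perc_on_eq_perc:
  assumes fin: "finite E" and \<eta>E: "\<eta> \<subseteq> E"
  shows "perc_on E \<eta> p = perc \<eta> p"
proof
  fix \<omega>
  let ?p' = "\<lambda>e. if e \<in> \<eta> then p e else 0"
  show "perc_on E \<eta> p \<omega> = perc \<eta> p \<omega>"
  proof (cases "\<omega> \<subseteq> E")
    case True
    have "perc_on E \<eta> p \<omega> = perc \<eta> ?p' (\<omega> \<inter> \<eta>) * perc (E - \<eta>) ?p' (\<omega> - \<eta>)"
      unfolding perc_on_def using perc_split[OF fin \<eta>E True] .
    also have "perc \<eta> ?p' (\<omega> \<inter> \<eta>) = perc \<eta> p (\<omega> \<inter> \<eta>)"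
      by (auto simp: perc_def intro: prod.cong)
    also have "perc (E - \<eta>) ?p' (\<omega> - \<eta>) = perc (E - \<eta>) (\<lambda>_. 0) (\<omega> - \<eta>)"
      by (auto simp: perc_def intro: prod.cong)
    also have "perc (E - \<eta>) (\<lambda>_. 0) (\<omega> - \<eta>) = (if \<omega> \<subseteq> \<eta> then 1 else 0)"
    proof -
      have "\<omega> - \<eta> \<subseteq> E - \<eta>" using True by blast
      then show ?thesis using fin by (simp add: perc_zero)
    qed
    finally show ?thesis
      by (auto simp: perc_outside Int_absorb2)
  qed (use \<eta>E in \<open>auto simp: perc_on_def perc_outside\<close>)
qed

lemma inter_law_commute: "inter_law E \<pi> \<nu> = inter_law E \<nu> \<pi>"
proof
  fix \<omega>
  have "inter_law E \<pi> \<nu> \<omega> = (\<Sum>a\<in>Pow E. \<Sum>b\<in>Pow E. if a \<inter> b = \<omega> then \<pi> a * \<nu> b else 0)"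
    by (simp add: inter_law_def sum.cartesian_product)
  also have "\<dots> = (\<Sum>b\<in>Pow E. \<Sum>a\<in>Pow E. if b \<inter> a = \<omega> then \<nu> b * \<pi> a else 0)"
    by (subst sum.swap) (auto simp: Int_commute mult.commute intro!: sum.cong)
  also have "\<dots> = inter_law E \<nu> \<pi> \<omega>"
    by (simp add: inter_law_def sum.cartesian_product)
  finally show "inter_law E \<pi> \<nu> \<omega> = inter_law E \<nu> \<pi> \<omega>" .
qed

lemma inter_law_perc_left:
  assumes "finite E"
  shows "inter_law E (perc E r) \<nu> \<omega> = (\<Sum>b\<in>Pow E. \<nu> b * perc b r \<omega>)"
proof -
  have "inter_law E (perc E r) \<nu> \<omega>
      = (\<Sum>a\<in>Pow E. \<Sum>b\<in>Pow E. if a \<inter> b = \<omega> then perc E r a * \<nu> b else 0)"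
    by (simp add: inter_law_def sum.cartesian_product)
  also have "\<dots> = (\<Sum>b\<in>Pow E. \<nu> b * (\<Sum>a\<in>Pow E. if a \<inter> b = \<omega> then perc E r a else 0))"
    by (subst sum.swap) (auto simp: sum_distrib_left intro!: sum.cong)
  also have "\<dots> = (\<Sum>b\<in>Pow E. \<nu> b * perc b r \<omega>)"
    using assms by (simp add: sum_perc_Int_eq)
  finally show ?thesis .
qed

lemma inter_law_perc_dirac:
  assumes "finite E" "\<eta> \<subseteq> E"
  shows "inter_law E (perc E r) (dirac \<eta>) \<omega> = perc \<eta> r \<omega>"
proof -
  have "inter_law E (perc E r) (dirac \<eta>) \<omega> = (\<Sum>b\<in>Pow E. dirac \<eta> b * perc b r \<omega>)"
    using assms(1) by (rule inter_law_perc_left)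
  also have "\<dots> = (\<Sum>b\<in>Pow E. if b = \<eta> then perc b r \<omega> else 0)"
    by (intro sum.cong) (auto simp: dirac_def)
  finally show ?thesis
    using assms by simp
qed

lemma cond_cond:
  assumes "A \<subseteq> B" "sum \<mu> B \<noteq> 0"
  shows "cond (cond \<mu> B) A = cond \<mu> A"
proof
  fix \<omega>
  have "sum (cond \<mu> B) A = sum \<mu> A / sum \<mu> B"
    using assms(1) by (auto simp: cond_def sum_divide_distrib intro!: sum.cong)
  then show "cond (cond \<mu> B) A \<omega> = cond \<mu> A \<omega>"
    using assms by (auto simp: cond_def)
qed

lemma normalize_eq_cond:
  assumes "finite S" "A \<subseteq> S" "sum f S \<noteq> 0"
    and f: "\<And>\<eta>. f \<eta> = (if \<eta> \<in> A then c * \<beta> \<eta> else 0)"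
  shows "f \<eta> / sum f S = cond \<beta> A \<eta>"
proof -
  have "sum f S = c * sum \<beta> A"
    using assms(1,2) by (simp add: f sum.If_cases Int_absorb1 sum_distrib_left)
  then show ?thesis
    using assms(3) by (simp add: f cond_def)
qed

lemma perc_pos:
  assumes "finite E" "\<forall>e\<in>E. 0 < r e \<and> r e < 1" "\<omega> \<subseteq> E"
  shows "0 < perc E r \<omega>"
  using assms by (auto simp: perc_def intro!: prod_pos)

lemma qpar_bounds:
  assumes "0 < x e * (1 - p e)"
  shows "0 < qpar p x e" "qpar p x e < 1"
  using assms by (simp_all add: qpar_def field_simps)

lemma qpar_eq:
  assumes "1 + x e * (1 - p e) \<noteq> 0"
  shows "qpar p x e = x e * (1 - p e) * (1 - qpar p x e)"
  using assms by (simp add: qpar_def field_simps)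

lemma perc_qpar_mult:
  assumes fin: "finite E" and \<eta>E: "\<eta> \<subseteq> E" and nz: "\<forall>e\<in>\<eta>. 1 + x e * (1 - p e) \<noteq> 0"
  shows "perc E (qpar p x) \<eta> * perc (E - \<eta>) p {} = prod x \<eta> * (\<Prod>e\<in>E. (1 - qpar p x e) * (1 - p e))"
proof -
  let ?q = "qpar p x"
  have "perc E ?q \<eta> = prod ?q \<eta> * (\<Prod>e\<in>E - \<eta>. 1 - ?q e)"
    using perc_split[OF fin \<eta>E \<eta>E] by (simp add: perc_self perc_empty)
  also have "prod ?q \<eta> = prod x \<eta> * (\<Prod>e\<in>\<eta>. (1 - ?q e) * (1 - p e))"
    using nz qpar_eq[of x _ p] by (simp add: prod.distrib[symmetric] mult_ac cong: prod.cong)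
  also have "(\<Prod>e\<in>E. (1 - ?q e) * (1 - p e))
      = (\<Prod>e\<in>E - \<eta>. (1 - ?q e) * (1 - p e)) * (\<Prod>e\<in>\<eta>. (1 - ?q e) * (1 - p e))"
    using fin \<eta>E by (simp add: prod.subset_diff)
  ultimately show ?thesis
    by (simp add: perc_empty prod.distrib mult_ac)
qed

lemma joint_w_eq_perc:
  assumes fin: "finite E" and \<Sigma>E: "\<Sigma> \<subseteq> Pow E"
  shows "joint_w E p x \<Sigma> \<omega> \<eta>
    = (if \<eta> \<in> \<Sigma> then perc \<eta> p \<omega> * (gamma E p x \<Sigma> \<eta> * perc (E - \<eta>) p {}) else 0)"
proof (cases "\<eta> \<in> \<Sigma> \<and> \<omega> \<subseteq> \<eta>")
  case True
  then have "\<eta> \<subseteq> E" "\<omega> \<subseteq> E" "\<omega> \<inter> \<eta> = \<omega>" "\<omega> - \<eta> = {}"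
    using \<Sigma>E by auto
  then have "perc E p \<omega> = perc \<eta> p \<omega> * perc (E - \<eta>) p {}"
    using perc_split[OF fin] by metis
  then show ?thesis
    using True \<open>\<omega> \<subseteq> E\<close> by (simp add: joint_w_def up_set_def rho_def)
qed (auto simp: joint_w_def up_set_def perc_outside)

lemma sum_joint_w:
  assumes fin: "finite E" and \<Sigma>E: "\<Sigma> \<subseteq> Pow E"
  shows "(\<Sum>\<omega>\<in>Pow E. joint_w E p x \<Sigma> \<omega> \<eta>)
    = (if \<eta> \<in> \<Sigma> then gamma E p x \<Sigma> \<eta> * perc (E - \<eta>) p {} else 0)"
proof (cases "\<eta> \<in> \<Sigma>")
  case True
  then have "\<eta> \<subseteq> E" using \<Sigma>E by auto
  then have "(\<Sum>\<omega>\<in>Pow E. perc \<eta> p \<omega>) = (\<Sum>\<omega>\<in>Pow \<eta>. perc \<eta> p \<omega>)"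
    using fin by (intro sum.mono_neutral_right) (auto simp: perc_outside)
  also have "\<dots> = 1"
    using fin \<open>\<eta> \<subseteq> E\<close> by (intro sum_perc_Pow) (rule finite_subset)
  finally show ?thesis
    using True by (simp add: joint_w_eq_perc[OF fin \<Sigma>E] sum_distrib_right[symmetric])
qed (simp add: joint_w_eq_perc[OF assms])

lemma joint_eq_perc_marg_Sigma:
  assumes "finite E" "\<Sigma> \<subseteq> Pow E"
  shows "joint E p x \<Sigma> \<omega> \<eta> = (if \<eta> \<in> \<Sigma> then perc \<eta> p \<omega> * marg_Sigma E p x \<Sigma> \<eta> else 0)"
proof -
  let ?Z = "\<Sum>(a, b)\<in>Pow E \<times> \<Sigma>. joint_w E p x \<Sigma> a b"
  have "marg_Sigma E p x \<Sigma> \<eta> = (if \<eta> \<in> \<Sigma> then gamma E p x \<Sigma> \<eta> * perc (E - \<eta>) p {} else 0) / ?Z"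
    by (simp add: marg_Sigma_def joint_def sum_divide_distrib[symmetric] sum_joint_w[OF assms])
  then show ?thesis
    by (simp add: joint_def joint_w_eq_perc[OF assms, where \<omega> = \<omega> and \<eta> = \<eta>])
qed

lemma marg_Sigma_eq:
  assumes fin: "finite E" and p01: "\<forall>e\<in>E. 0 < p e \<and> p e < 1" and xpos: "\<forall>e\<in>E. 0 < x e"
    and \<Sigma>E: "\<Sigma> \<subseteq> Pow E" and \<Sigma>ne: "\<Sigma> \<noteq> {}"
  shows "marg_Sigma E p x \<Sigma> \<eta> = (if \<eta> \<in> \<Sigma> then prod x \<eta> / (\<Sum>\<eta>'\<in>\<Sigma>. prod x \<eta>') else 0)"
proof -
  let ?q = "qpar p x"
  define c where "c = (\<Prod>e\<in>E. (1 - ?q e) * (1 - p e)) / sum (perc E ?q) \<Sigma>"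
  have pos: "0 < x e * (1 - p e)" if "e \<in> E" for e
    using that p01 xpos by simp
  then have q01: "\<forall>e\<in>E. 0 < ?q e \<and> ?q e < 1"
    by (simp add: qpar_bounds)
  have "finite \<Sigma>"
    using \<Sigma>E fin by (meson finite_Pow_iff finite_subset)
  then have "0 < sum (perc E ?q) \<Sigma>"
    using \<Sigma>ne \<Sigma>E perc_pos[OF fin q01] by (intro sum_pos) auto
  moreover have "(\<Prod>e\<in>E. (1 - ?q e) * (1 - p e)) \<noteq> 0"
    using q01 p01 by (fastforce simp: prod_zero_iff[OF fin])
  ultimately have "c \<noteq> 0"
    by (simp add: c_def)
  have weight: "(\<Sum>\<omega>\<in>Pow E. joint_w E p x \<Sigma> \<omega> \<eta>) = (if \<eta> \<in> \<Sigma> then c * prod x \<eta> else 0)" for \<eta>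
  proof (cases "\<eta> \<in> \<Sigma>")
    case True
    then have "\<eta> \<subseteq> E" using \<Sigma>E by auto
    moreover have "\<forall>e\<in>\<eta>. 1 + x e * (1 - p e) \<noteq> 0"
      using \<open>\<eta> \<subseteq> E\<close> pos by (fastforce dest: add_pos_pos[OF zero_less_one])
    ultimately show ?thesis
      using True perc_qpar_mult[OF fin]
      by (simp add: sum_joint_w[OF fin \<Sigma>E] gamma_def cond_def c_def)
  qed (simp add: sum_joint_w[OF fin \<Sigma>E])
  have "(\<Sum>(a, b)\<in>Pow E \<times> \<Sigma>. joint_w E p x \<Sigma> a b) = (\<Sum>b\<in>\<Sigma>. \<Sum>a\<in>Pow E. joint_w E p x \<Sigma> a b)"
    by (simp add: sum.cartesian_product[symmetric] sum.swap[of _ "Pow E"])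
  also have "\<dots> = c * (\<Sum>\<eta>'\<in>\<Sigma>. prod x \<eta>')"
    by (simp add: weight sum_distrib_left)
  finally have "(\<Sum>(a, b)\<in>Pow E \<times> \<Sigma>. joint_w E p x \<Sigma> a b) = c * (\<Sum>\<eta>'\<in>\<Sigma>. prod x \<eta>')" .
  then show ?thesis
    using \<open>c \<noteq> 0\<close>
    by (simp add: marg_Sigma_def joint_def sum_divide_distrib[symmetric] weight)
qed

lemma marg_Omega_eq_inter_law:
  assumes fin: "finite E" and \<Sigma>E: "\<Sigma> \<subseteq> Pow E"
  shows "marg_Omega E p x \<Sigma> \<omega> = inter_law E (marg_Sigma E p x \<Sigma>) (perc E p) \<omega>"
proof -
  have "marg_Omega E p x \<Sigma> \<omega> = (\<Sum>\<eta>\<in>Pow E. joint E p x \<Sigma> \<omega> \<eta>)"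
    unfolding marg_Omega_def using fin \<Sigma>E
    by (intro sum.mono_neutral_left) (auto simp: joint_eq_perc_marg_Sigma)
  also have "\<dots> = (\<Sum>\<eta>\<in>Pow E. marg_Sigma E p x \<Sigma> \<eta> * perc \<eta> p \<omega>)"
  proof (rule sum.cong[OF refl])
    fix \<eta>
    have "marg_Sigma E p x \<Sigma> \<eta> = 0" if "\<eta> \<notin> \<Sigma>"
      unfolding marg_Sigma_def using that by (simp add: joint_eq_perc_marg_Sigma[OF fin \<Sigma>E])
    then show "joint E p x \<Sigma> \<omega> \<eta> = marg_Sigma E p x \<Sigma> \<eta> * perc \<eta> p \<omega>"
      by (simp add: joint_eq_perc_marg_Sigma[OF fin \<Sigma>E])
  qed
  also have "\<dots> = inter_law E (marg_Sigma E p x \<Sigma>) (perc E p) \<omega>"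
    by (subst inter_law_commute) (simp add: inter_law_perc_left[OF fin])
  finally show ?thesis .
qed

lemma joint_div_marg_Omega:
  assumes fin: "finite E" and \<Sigma>E: "\<Sigma> \<subseteq> Pow E" and nz: "marg_Omega E p x \<Sigma> \<omega> \<noteq> 0"
  shows "joint E p x \<Sigma> \<omega> \<eta> / marg_Omega E p x \<Sigma> \<omega> = cond (perc E (qpar p x)) (up_set \<Sigma> \<omega>) \<eta>"
proof -
  let ?Z = "\<Sum>(a, b)\<in>Pow E \<times> \<Sigma>. joint_w E p x \<Sigma> a b"
  have joint: "joint E p x \<Sigma> \<omega> \<eta>' = (if \<eta>' \<in> up_set \<Sigma> \<omega> then perc E p \<omega> / ?Z * gamma E p x \<Sigma> \<eta>' else 0)"
    for \<eta>'
    using \<Sigma>E by (auto simp: joint_def joint_w_def up_set_def rho_def)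
  have "finite \<Sigma>"
    using \<Sigma>E fin by (meson finite_Pow_iff finite_subset)
  moreover have "up_set \<Sigma> \<omega> \<subseteq> \<Sigma>"
    by (auto simp: up_set_def)
  ultimately have "joint E p x \<Sigma> \<omega> \<eta> / marg_Omega E p x \<Sigma> \<omega> = cond (gamma E p x \<Sigma>) (up_set \<Sigma> \<omega>) \<eta>"
    using nz joint unfolding marg_Omega_def by (rule normalize_eq_cond)
  moreover have "sum (perc E (qpar p x)) \<Sigma> \<noteq> 0"
    \<comment> \<open>otherwise \<open>gamma\<close> divides by zero, so it and the joint law vanish\<close>
  proof
    assume "sum (perc E (qpar p x)) \<Sigma> = 0"
    then have "joint E p x \<Sigma> \<omega> \<eta>' = 0" for \<eta>'
      by (simp add: joint gamma_def cond_def)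
    then show False
      using nz by (simp add: marg_Omega_def)
  qed
  ultimately show ?thesis
    using \<open>up_set \<Sigma> \<omega> \<subseteq> \<Sigma>\<close> by (simp add: gamma_def cond_cond)
qed

theorem proposition3p5:
  fixes E :: "'e set" and p x :: "'e \<Rightarrow> real" and \<Sigma> :: "'e set set"
  assumes "finite E"
    and "\<forall>e\<in>E. 0 < p e \<and> p e < 1"
    and "\<forall>e\<in>E. 0 < x e"
    and "\<Sigma> \<subseteq> Pow E" and "\<Sigma> \<noteq> {}"
  shows
    "(\<forall>\<eta>. marg_Sigma E p x \<Sigma> \<eta> =
        (if \<eta> \<in> \<Sigma> then (\<Prod>e\<in>\<eta>. x e) / (\<Sum>\<eta>'\<in>\<Sigma>. \<Prod>e\<in>\<eta>'. x e) else 0))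
   \<and> (\<forall>\<omega>. marg_Omega E p x \<Sigma> \<omega> \<noteq> 0 \<longrightarrow>
        (\<forall>\<eta>. joint E p x \<Sigma> \<omega> \<eta> / marg_Omega E p x \<Sigma> \<omega>
              = cond (perc E (qpar p x)) (up_set \<Sigma> \<omega>) \<eta>))
   \<and> (\<forall>\<omega>. marg_Omega E p x \<Sigma> \<omega> = inter_law E (marg_Sigma E p x \<Sigma>) (perc E p) \<omega>)
   \<and> (\<forall>\<eta>\<in>\<Sigma>. marg_Sigma E p x \<Sigma> \<eta> \<noteq> 0 \<longrightarrow>
        (\<forall>\<omega>. joint E p x \<Sigma> \<omega> \<eta> / marg_Sigma E p x \<Sigma> \<eta> = inter_law E (perc E p) (dirac \<eta>) \<omega>
            \<and> joint E p x \<Sigma> \<omega> \<eta> / marg_Sigma E p x \<Sigma> \<eta> = perc_on E \<eta> p \<omega>))"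
proof (intro conjI allI ballI impI)
  have fin: "finite E" and \<Sigma>E: "\<Sigma> \<subseteq> Pow E"
    using assms by simp_all
  show "marg_Sigma E p x \<Sigma> \<eta> = (if \<eta> \<in> \<Sigma> then prod x \<eta> / (\<Sum>\<eta>'\<in>\<Sigma>. prod x \<eta>') else 0)" for \<eta>
    using assms by (rule marg_Sigma_eq)
  show "joint E p x \<Sigma> \<omega> \<eta> / marg_Omega E p x \<Sigma> \<omega> = cond (perc E (qpar p x)) (up_set \<Sigma> \<omega>) \<eta>"
    if "marg_Omega E p x \<Sigma> \<omega> \<noteq> 0" for \<omega> \<eta>
    using fin \<Sigma>E that by (rule joint_div_marg_Omega)
  show "marg_Omega E p x \<Sigma> \<omega> = inter_law E (marg_Sigma E p x \<Sigma>) (perc E p) \<omega>" for \<omega>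
    using fin \<Sigma>E by (rule marg_Omega_eq_inter_law)
  fix \<eta> \<omega> assume \<eta>: "\<eta> \<in> \<Sigma>" and nz: "marg_Sigma E p x \<Sigma> \<eta> \<noteq> 0"
  have "joint E p x \<Sigma> \<omega> \<eta> / marg_Sigma E p x \<Sigma> \<eta> = perc \<eta> p \<omega>"
    using \<eta> nz by (simp add: joint_eq_perc_marg_Sigma[OF fin \<Sigma>E])
  moreover have "\<eta> \<subseteq> E" using \<eta> \<Sigma>E by auto
  ultimately show "joint E p x \<Sigma> \<omega> \<eta> / marg_Sigma E p x \<Sigma> \<eta> = inter_law E (perc E p) (dirac \<eta>) \<omega>"
    and "joint E p x \<Sigma> \<omega> \<eta> / marg_Sigma E p x \<Sigma> \<eta> = perc_on E \<eta> p \<omega>"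
    using fin by (simp_all add: inter_law_perc_dirac perc_on_eq_perc)
qed

end
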